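(* Let $L_{n-d}$ be a linear subspace of $\mathbb{R}^n$ of codimension $d$ ($d\le n-1$) in general position with respect to one of the reflection arrangements $\mathcal{A}(A_{n-1})$, $\mathcal{A}(B_n)$, $\mathcal{A}(D_n)$. Then the number of regions of this arrangement intersected by $L_{n-d}$ equals, respectively, $$2\left(\left[{n\atop d+1}\right]+\left[{n\atop d+3}\right]+\dots\right),\quad 2\big(B(n,d+1)+B(n,d+3)+\dots\big),\quad 2\big(D(n,d+1)+D(n,d+3)+\dots\big).$$
   Context: $\mathcal{A}(A_{n-1})$ consists of the hyperplanes $x_i=x_j$ ($1\le i<j\le n$) in $\mathbb{R}^n$; $\mathcal{A}(B_n)$ of the hyperplanes $x_i=x_j$, $x_i=-x_j$ ($1\le i<j\le n$) and $x_k=0$ ($1\le k\le n$); $\mathcal{A}(D_n)$ of the hyperplanes $x_i=x_j$, $x_i=-x_j$ ($1\le i<j\le n$). Regions of an arrangement are the connected components of the complement of the union of its hyperplanes. For an arrangement $\mathcal{A}$ and $\mathcal{B}\subset\mathcal{A}$, $\mathrm{rank}(\mathcal{B})=n-\dim\bigcap_{H\in\mathcal{B}}H$. A linear subspace $L_{n-d}$ of codimension $d\le n-1$ is in general position w.r.t. $\mathcal{A}$ if for every nonempty $\mathcal{B}\subset\mathcal{A}$, $\dim\bigcap_{H\in\mathcal{B}}(H\cap L_{n-d})$ equals $n-d-\mathrm{rank}(\mathcal{B})$ if $\mathrm{rank}(\mathcal{B})\le n-d$ and $0$ otherwise. The numbers are defined by $t(t+1)\cdots(t+n-1)=\sum_k\left[{n\atop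 k}\right]t^k$, $(t+1)(t+3)\cdots(t+2n-1)=\sum_kB(n,k)t^k$, $(t+1)(t+3)\cdots(t+2n-3)(t+n-1)=\sum_kD(n,k)t^k$, all set to $0$ outside the range of exponents of the respective polynomial. *)

theory Defs
  imports "HOL-Analysis.Analysis" "HOL-Computational_Algebra.Polynomial"
begin

text \<open>Coefficient numbers, defined as in the paper via generating polynomials.
  Coefficients of a polynomial are automatically 0 outside its range of exponents.\<close>

definition stirl1 :: "nat \<Rightarrow> nat \<Rightarrow> nat" where
  "stirl1 n k = coeff (\<Prod>i<n. [:of_nat i, 1:]) k"

definition Bnum :: "nat \<Rightarrow> nat \<Rightarrow> nat" where
  "Bnum n k = coeff (\<Prod>i<n. [:2 * of_nat i + 1, 1:]) k"

definition Dnum :: "nat \<Rightarrow> nat \<Rightarrow> nat" where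
  "Dnum n k = coeff ((\<Prod>i<n - 1. [:2 * of_nat i + 1, 1:]) * [:of_nat n - 1, 1:]) k"

definition arrA :: "(real^'n) set set" where
  "arrA = {{x. x$i = x$j} | i j. i \<noteq> j}"

definition arrB :: "(real^'n) set set" where
  "arrB = {{x. x$i = x$j} | i j. i \<noteq> j} \<union> {{x. x$i = - x$j} | i j. i \<noteq> j}
          \<union> {{x. x$k = 0} | k. True}"

definition arrD :: "(real^'n) set set" where
  "arrD = {{x. x$i = x$j} | i j. i \<noteq> j} \<union> {{x. x$i = - x$j} | i j. i \<noteq> j}"

definition regions :: "(real^'n) set set \<Rightarrow> (real^'n) set set" where
  "regions A = components (UNIV - \<Union>A)"

definition arr_rank :: "(real^'n) set set \<Rightarrow> nat" where
  "arr_rank B = CARD('n) - dim (\<Inter>B)"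

definition general_position :: "(real^'n) set set \<Rightarrow> (real^'n) set \<Rightarrow> nat \<Rightarrow> bool" where
  "general_position A L d \<longleftrightarrow>
     (\<forall>B. B \<subseteq> A \<and> B \<noteq> {} \<longrightarrow>
        dim (\<Inter>H\<in>B. H \<inter> L) =
          (if arr_rank B \<le> CARD('n) - d then CARD('n) - d - arr_rank B else 0))"

definition num_regions_cut :: "(real^'n) set set \<Rightarrow> (real^'n) set \<Rightarrow> nat" where
  "num_regions_cut A L = card {C \<in> regions A. C \<inter> L \<noteq> {}}"

end

theory Submission
  imports Defs
begin

text \<open>A region of an arrangement meets \<open>L\<close> exactly when it is the sign class of a point of \<open>L\<close>
  off the hyperplanes, so the regions cut by \<open>L\<close> are counted by the sign vectors realised on \<open>L\<close>.
  Deletion and restriction give Zaslavsky's formula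
  \<open>\<Sum>B\<subseteq>\<A>. (-1)\<^bsup>|B|\<^esup> (-1)\<^bsup>dim L - dim (L \<inter> \<Inter>B)\<^esup>\<close>, and general position turns the exponent into
  \<open>min (n - dim \<Inter>B) (n - d)\<close>, so the count is a signed sum of the coefficients of the
  characteristic polynomial \<open>\<chi>(t) = \<Sum>B\<subseteq>\<A>. (-1)\<^bsup>|B|\<^esup> t\<^bsup>dim \<Inter>B\<^esup>\<close>.  For the reflection arrangements
  every flat is a coordinate subspace up to signs, so by inclusion-exclusion \<open>\<chi>(2s + 1)\<close> is the
  number of integer points of \<open>[-s, s]\<^sup>n\<close> off the arrangement; counting these directly identifies
  \<open>\<chi>(t)\<close> with \<open>(-1)\<^sup>n q(-t)\<close>, \<open>q\<close> the generating polynomial of the numbers in the statement.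
  As \<open>q(-1) = 0\<close>, the signed sum collapses to twice the sum of every other coefficient.\<close>

section \<open>Sign vectors and Zaslavsky's theorem\<close>

definition sign_vector :: "('i \<Rightarrow> 'a::euclidean_space) \<Rightarrow> 'i set \<Rightarrow> 'a \<Rightarrow> 'i \<Rightarrow> real" where
  "sign_vector a I x = restrict (\<lambda>i. sgn (a i \<bullet> x)) I"

definition off_hyperplanes :: "('i \<Rightarrow> 'a::euclidean_space) \<Rightarrow> 'i set \<Rightarrow> 'a set \<Rightarrow> 'a set" where
  "off_hyperplanes a I V = {x\<in>V. \<forall>i\<in>I. a i \<bullet> x \<noteq> 0}"

lemma finite_sign_vectors:
  assumes "finite I"
  shows "finite (sign_vector a I ` S)"
proof (rule finite_subset)
  show "sign_vector a I ` S \<subseteq> PiE I (\<lambda>_. {-1, 0, 1})"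
    by (auto simp: sign_vector_def sgn_if split: if_splits)
  show "finite (PiE I (\<lambda>_. {-1, 0, 1::real}))"
    using assms by (simp add: finite_PiE)
qed

lemma sign_vector_eq_iff:
  "sign_vector a I y = sign_vector a I x \<longleftrightarrow> (\<forall>i\<in>I. sgn (a i \<bullet> y) = sgn (a i \<bullet> x))"
  by (auto simp: sign_vector_def restrict_def fun_eq_iff)

lemma sign_vector_insert: "sign_vector a (insert j I) x = (sign_vector a I x)(j := sgn (a j \<bullet> x))"
  by (auto simp: sign_vector_def restrict_def)

lemma off_hyperplanes_sign_vector_eq:
  assumes "y \<in> V" "x \<in> off_hyperplanes a I W" "sign_vector a I y = sign_vector a I x"
  shows "y \<in> off_hyperplanes a I V"
  using assms by (auto simp: off_hyperplanes_def sign_vector_eq_iff sgn_0_0 dest!: bspec)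

lemma eventually_sign_vector_stable:
  assumes "finite I" "x \<in> off_hyperplanes a I V"
  shows "\<forall>\<^sub>F \<epsilon> in at_right 0. sign_vector a I (x + \<epsilon> *\<^sub>R w) = sign_vector a I x"
proof -
  have "\<forall>\<^sub>F \<epsilon> in at_right 0. sgn (a i \<bullet> (x + \<epsilon> *\<^sub>R w)) = sgn (a i \<bullet> x)" if "i \<in> I" for i
  proof -
    have lim: "((\<lambda>\<epsilon>. a i \<bullet> x + \<epsilon> * (a i \<bullet> w)) \<longlongrightarrow> a i \<bullet> x) (at_right 0)"
      by (rule tendsto_eq_intros refl)+ simp
    have "a i \<bullet> x \<noteq> 0" using assms(2) that by (simp add: off_hyperplanes_def)
    then consider "a i \<bullet> x > 0" | "a i \<bullet> x < 0" by linarith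
    then show ?thesis
    proof cases
      case 1
      show ?thesis using order_tendstoD(1)[OF lim 1]
        by (rule eventually_mono) (simp add: inner_add_right 1)
    next
      case 2
      show ?thesis using order_tendstoD(2)[OF lim 2]
        by (rule eventually_mono) (simp add: inner_add_right 2)
    qed
  qed
  then show ?thesis
    using assms(1) by (simp add: sign_vector_eq_iff eventually_ball_finite)
qed

lemma subspace_hyperplane_section: "subspace V \<Longrightarrow> subspace (V \<inter> {x. b \<bullet> x = 0})"
  by (intro subspace_inter subspace_hyperplane)

lemma exists_point_on_side:
  assumes "finite I" "subspace V" "v \<in> V" "a j \<bullet> v \<noteq> 0"
    and x: "x \<in> off_hyperplanes a I V" "a j \<bullet> x = 0" and c: "c = 1 \<or> c = -1"
  shows "\<exists>y\<in>off_hyperplanes a I V. sign_vector a I y = sign_vector a I x \<and> sgn (a j \<bullet> y) = c"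
proof -
  define w where "w = (c * sgn (a j \<bullet> v)) *\<^sub>R v"
  have "\<forall>\<^sub>F \<epsilon> in at_right 0. 0 < \<epsilon> \<and> sign_vector a I (x + \<epsilon> *\<^sub>R w) = sign_vector a I x"
    using eventually_at_right_less eventually_sign_vector_stable[OF assms(1) x(1)]
    by (rule eventually_conj)
  then obtain \<epsilon> where \<epsilon>: "0 < \<epsilon>" "sign_vector a I (x + \<epsilon> *\<^sub>R w) = sign_vector a I x"
    using eventually_happens'[OF trivial_limit_at_right_real] by blast
  have "a j \<bullet> (x + \<epsilon> *\<^sub>R w) = \<epsilon> * (c * (sgn (a j \<bullet> v) * (a j \<bullet> v)))"
    unfolding w_def by (simp only: inner_add_right inner_scaleR_right x(2) add_0_left)
  moreover have "sgn (a j \<bullet> v) * (a j \<bullet> v) > 0"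
    using assms(4) by (metis abs_sgn mult.commute zero_less_abs_iff)
  ultimately have "sgn (a j \<bullet> (x + \<epsilon> *\<^sub>R w)) = c"
    using \<epsilon>(1) c assms(4) by (elim disjE) (simp_all add: sgn_mult)
  moreover have "x + \<epsilon> *\<^sub>R w \<in> V"
    using x(1) assms(2,3) unfolding w_def off_hyperplanes_def
    by (auto intro: subspace_add subspace_scale)
  then have "x + \<epsilon> *\<^sub>R w \<in> off_hyperplanes a I V"
    using x(1) \<epsilon>(2) by (rule off_hyperplanes_sign_vector_eq)
  ultimately show ?thesis
    using \<epsilon>(2) by blast
qed

lemma sgn_inner_segment:
  fixes b :: "'a::real_inner"
  assumes "b \<bullet> x \<noteq> 0" "sgn (b \<bullet> y) = sgn (b \<bullet> x)" "0 \<le> u" "u \<le> 1"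
  shows "sgn (b \<bullet> ((1 - u) *\<^sub>R x + u *\<^sub>R y)) = sgn (b \<bullet> x)"
proof -
  consider "b \<bullet> x > 0" "b \<bullet> y > 0" | "b \<bullet> x < 0" "b \<bullet> y < 0"
    using assms(1,2) by (cases "b \<bullet> x > 0") (auto simp: sgn_if split: if_splits)
  then show ?thesis
  proof cases
    case 1
    then have "(1 - u) * - (b \<bullet> x) + u * - (b \<bullet> y) < 0"
      using assms(3,4) by (intro convex_bound_lt) auto
    with 1 show ?thesis by (simp add: inner_add_right)
  next
    case 2
    then have "(1 - u) * (b \<bullet> x) + u * (b \<bullet> y) < 0"
      using assms(3,4) by (intro convex_bound_lt) auto
    with 2 show ?thesis by (simp add: inner_add_right)
  qed
qed

text \<open>The segment between two points with the same sign vector on opposite sides of the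
  hyperplane of \<open>a j\<close> crosses it without changing the other signs.\<close>

lemma exists_point_between_sides:
  assumes "subspace V" and x: "x \<in> off_hyperplanes a I V" "a j \<bullet> x > 0"
    and y: "y \<in> off_hyperplanes a I V" "a j \<bullet> y < 0" and xy: "sign_vector a I y = sign_vector a I x"
  shows "\<exists>z\<in>off_hyperplanes a I (V \<inter> {z. a j \<bullet> z = 0}). sign_vector a I z = sign_vector a I x"
proof -
  define u where "u = (a j \<bullet> x) / (a j \<bullet> x - a j \<bullet> y)"
  define z where "z = (1 - u) *\<^sub>R x + u *\<^sub>R y"
  have u: "0 < u" "u < 1" using x(2) y(2) by (auto simp: u_def field_simps)
  have "a j \<bullet> z = (1 - u) * (a j \<bullet> x) + u * (a j \<bullet> y)"
    by (simp add: z_def inner_add_right)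
  also have "\<dots> = 0" using x(2) y(2) by (simp add: u_def field_simps)
  finally have zj: "a j \<bullet> z = 0" .
  have "sgn (a i \<bullet> z) = sgn (a i \<bullet> x)" if "i \<in> I" for i
    unfolding z_def using x(1) xy that u
    by (intro sgn_inner_segment) (auto simp: off_hyperplanes_def sign_vector_eq_iff)
  then have sz: "sign_vector a I z = sign_vector a I x" by (simp add: sign_vector_eq_iff)
  have "z \<in> V \<inter> {z. a j \<bullet> z = 0}"
    using x(1) y(1) zj unfolding z_def off_hyperplanes_def
    by (auto intro: subspace_add subspace_scale assms(1))
  then have "z \<in> off_hyperplanes a I (V \<inter> {z. a j \<bullet> z = 0})"
    using x(1) sz by (rule off_hyperplanes_sign_vector_eq)
  with sz show ?thesis by blast
qed

definition sign_vectors_on_side ::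
    "('i \<Rightarrow> 'a::euclidean_space) \<Rightarrow> 'i set \<Rightarrow> 'a set \<Rightarrow> 'i \<Rightarrow> real \<Rightarrow> ('i \<Rightarrow> real) set" where
  "sign_vectors_on_side a I V j c = sign_vector a I ` {x \<in> off_hyperplanes a I V. sgn (a j \<bullet> x) = c}"

lemma sign_vectors_insert_eq_sides:
  "sign_vector a (insert j I) ` off_hyperplanes a (insert j I) V
     = (\<lambda>\<tau>. \<tau>(j := 1)) ` sign_vectors_on_side a I V j 1
       \<union> (\<lambda>\<tau>. \<tau>(j := -1)) ` sign_vectors_on_side a I V j (-1)"
proof -
  have "sgn (a j \<bullet> x) = 1 \<or> sgn (a j \<bullet> x) = -1 \<longleftrightarrow> a j \<bullet> x \<noteq> 0" for x
    by (auto simp: sgn_if)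
  then show ?thesis
    by (auto simp: sign_vectors_on_side_def sign_vector_insert off_hyperplanes_def image_iff) metis+
qed

lemma sign_vectors_on_sides_Un:
  assumes "finite I" "subspace V" "v \<in> V" "a j \<bullet> v \<noteq> 0"
  shows "sign_vectors_on_side a I V j 1 \<union> sign_vectors_on_side a I V j (-1)
       = sign_vector a I ` off_hyperplanes a I V"
proof
  show "sign_vector a I ` off_hyperplanes a I V
      \<subseteq> sign_vectors_on_side a I V j 1 \<union> sign_vectors_on_side a I V j (-1)"
  proof
    fix \<tau> assume "\<tau> \<in> sign_vector a I ` off_hyperplanes a I V"
    then obtain x where x: "x \<in> off_hyperplanes a I V" "\<tau> = sign_vector a I x" by blast
    show "\<tau> \<in> sign_vectors_on_side a I V j 1 \<union> sign_vectors_on_side a I V j (-1)"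
    proof (cases "a j \<bullet> x = 0")
      case True
      then obtain y where "y \<in> off_hyperplanes a I V" "sign_vector a I y = \<tau>" "sgn (a j \<bullet> y) = 1"
        using exists_point_on_side[OF assms x(1) True, of 1] x(2) by auto
      then show ?thesis by (auto simp: sign_vectors_on_side_def)
    next
      case False
      then have "sgn (a j \<bullet> x) = 1 \<or> sgn (a j \<bullet> x) = -1" by (auto simp: sgn_if)
      then show ?thesis using x by (auto simp: sign_vectors_on_side_def)
    qed
  qed
qed (auto simp: sign_vectors_on_side_def)

lemma sign_vectors_on_sides_Int:
  assumes "finite I" "subspace V" "v \<in> V" "a j \<bullet> v \<noteq> 0"
  shows "sign_vectors_on_side a I V j 1 \<inter> sign_vectors_on_side a I V j (-1)
       = sign_vector a I ` off_hyperplanes a I (V \<inter> {x. a j \<bullet> x = 0})"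
proof
  show "sign_vectors_on_side a I V j 1 \<inter> sign_vectors_on_side a I V j (-1)
      \<subseteq> sign_vector a I ` off_hyperplanes a I (V \<inter> {x. a j \<bullet> x = 0})"
  proof
    fix \<tau> assume "\<tau> \<in> sign_vectors_on_side a I V j 1 \<inter> sign_vectors_on_side a I V j (-1)"
    then obtain x y where x: "x \<in> off_hyperplanes a I V" "a j \<bullet> x > 0" "\<tau> = sign_vector a I x"
      and y: "y \<in> off_hyperplanes a I V" "a j \<bullet> y < 0" "\<tau> = sign_vector a I y"
      by (auto simp: sign_vectors_on_side_def sgn_1_pos sgn_1_neg)
    then obtain z where "z \<in> off_hyperplanes a I (V \<inter> {x. a j \<bullet> x = 0})" "sign_vector a I z = \<tau>"
      using exists_point_between_sides[OF assms(2) x(1,2) y(1,2)] by auto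
    then show "\<tau> \<in> sign_vector a I ` off_hyperplanes a I (V \<inter> {x. a j \<bullet> x = 0})" by blast
  qed
next
  show "sign_vector a I ` off_hyperplanes a I (V \<inter> {x. a j \<bullet> x = 0})
      \<subseteq> sign_vectors_on_side a I V j 1 \<inter> sign_vectors_on_side a I V j (-1)"
  proof
    fix \<tau> assume "\<tau> \<in> sign_vector a I ` off_hyperplanes a I (V \<inter> {x. a j \<bullet> x = 0})"
    then obtain x where x: "x \<in> off_hyperplanes a I V" "a j \<bullet> x = 0" "\<tau> = sign_vector a I x"
      by (auto simp: off_hyperplanes_def)
    have "\<tau> \<in> sign_vectors_on_side a I V j c" if c: "c = 1 \<or> c = -1" for c
    proof -
      obtain y where "y \<in> off_hyperplanes a I V" "sign_vector a I y = \<tau>" "sgn (a j \<bullet> y) = c"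
        using exists_point_on_side[OF assms x(1,2) c] x(3) by auto
      then show ?thesis unfolding sign_vectors_on_side_def by blast
    qed
    then show "\<tau> \<in> sign_vectors_on_side a I V j 1 \<inter> sign_vectors_on_side a I V j (-1)" by blast
  qed
qed

text \<open>Deletion and restriction: a sign vector of the restriction to the hyperplane of \<open>a j\<close>
  extends to sign vectors on both of its sides, all others to exactly one.\<close>

lemma card_sign_vectors_insert:
  fixes a :: "'i \<Rightarrow> 'a::euclidean_space"
  assumes I: "finite I" "j \<notin> I" and V: "subspace V" "v \<in> V" "a j \<bullet> v \<noteq> 0"
  shows "card (sign_vector a (insert j I) ` off_hyperplanes a (insert j I) V)
       = card (sign_vector a I ` off_hyperplanes a I V)
         + card (sign_vector a I ` off_hyperplanes a I (V \<inter> {x. a j \<bullet> x = 0}))"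
proof -
  let ?side = "sign_vectors_on_side a I V j"
  have fin: "finite (?side c)" for c
    unfolding sign_vectors_on_side_def using I(1) by (rule finite_sign_vectors)
  have "\<tau> j = undefined" if "\<tau> \<in> ?side c" for \<tau> c
    using that I(2) by (auto simp: sign_vectors_on_side_def sign_vector_def)
  then have inj: "inj_on (\<lambda>\<tau>. \<tau>(j := c')) (?side c)" for c c'
    by (intro inj_onI) (metis fun_upd_idem_iff fun_upd_upd)
  have "card (sign_vector a (insert j I) ` off_hyperplanes a (insert j I) V)
      = card ((\<lambda>\<tau>. \<tau>(j := 1)) ` ?side 1) + card ((\<lambda>\<tau>. \<tau>(j := -1)) ` ?side (-1))"
    unfolding sign_vectors_insert_eq_sides
    using fin by (intro card_Un_disjoint finite_imageI) (auto dest!: fun_cong[of _ _ j])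
  also have "\<dots> = card (?side 1) + card (?side (-1))"
    using inj by (simp add: card_image)
  also have "\<dots> = card (?side 1 \<union> ?side (-1)) + card (?side 1 \<inter> ?side (-1))"
    by (rule card_Un_Int[OF fin fin])
  finally show ?thesis
    unfolding sign_vectors_on_sides_Un[where a = a, OF I(1) V]
      sign_vectors_on_sides_Int[where a = a, OF I(1) V] .
qed

lemma dim_hyperplane_section:
  fixes V :: "'a::euclidean_space set"
  assumes "subspace V" "v \<in> V" "b \<bullet> v \<noteq> 0"
  shows "dim (V \<inter> {x. b \<bullet> x = 0}) + 1 = dim V"
proof -
  let ?W = "V \<inter> {x. b \<bullet> x = 0}"
  have span_W: "span ?W = ?W"
    using subspace_hyperplane_section[OF assms(1)] by (rule span_eq_iff[THEN iffD2])
  have "v \<notin> span ?W" unfolding span_W using assms(3) by simp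
  then have dim_insert: "dim (insert v ?W) = dim ?W + 1" by (simp add: dim_insert)
  have "V \<subseteq> span (insert v ?W)"
  proof
    fix x assume x: "x \<in> V"
    define c where "c = (b \<bullet> x) / (b \<bullet> v)"
    have "x - c *\<^sub>R v \<in> ?W"
      using x assms by (simp add: c_def subspace_diff subspace_scale inner_diff_right)
    then have "(x - c *\<^sub>R v) + c *\<^sub>R v \<in> span (insert v ?W)"
      by (intro span_add span_scale) (auto intro: span_base)
    then show "x \<in> span (insert v ?W)" by simp
  qed
  then have "dim V \<le> dim (insert v ?W)" by (metis dim_span dim_subset)
  moreover have "dim (insert v ?W) \<le> dim V"
    using assms(2) by (intro dim_subset) auto
  ultimately show ?thesis using dim_insert by simp
qed

lemma dim_diff_section_insert:
  fixes a :: "'i \<Rightarrow> 'a::euclidean_space"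
  assumes "subspace V" "v \<in> V" "a j \<bullet> v \<noteq> 0"
  shows "dim V - dim (V \<inter> {x. \<forall>i\<in>insert j B. a i \<bullet> x = 0})
       = Suc (dim (V \<inter> {x. a j \<bullet> x = 0}) - dim (V \<inter> {x. a j \<bullet> x = 0} \<inter> {x. \<forall>i\<in>B. a i \<bullet> x = 0}))"
proof -
  let ?W = "V \<inter> {x. a j \<bullet> x = 0}"
  have "V \<inter> {x. \<forall>i\<in>insert j B. a i \<bullet> x = 0} = ?W \<inter> {x. \<forall>i\<in>B. a i \<bullet> x = 0}" by auto
  moreover have "dim (?W \<inter> {x. \<forall>i\<in>B. a i \<bullet> x = 0}) \<le> dim ?W" by (rule dim_subset) auto
  ultimately show ?thesis using dim_hyperplane_section[OF assms] by simp
qed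

lemma sum_Pow_insert:
  assumes "finite I" "j \<notin> I"
  shows "(\<Sum>B\<in>Pow (insert j I). f B) = (\<Sum>B\<in>Pow I. f B) + (\<Sum>B\<in>Pow I. f (insert j B))"
proof -
  have "(\<Sum>B\<in>Pow (insert j I). f B) = (\<Sum>B\<in>Pow I. f B) + (\<Sum>B\<in>insert j ` Pow I. f B)"
    unfolding Pow_insert using assms by (intro sum.union_disjoint) auto
  also have "(\<Sum>B\<in>insert j ` Pow I. f B) = (\<Sum>B\<in>Pow I. f (insert j B))"
    using assms by (subst sum.reindex) (auto intro!: inj_onI simp: insert_ident)
  finally show ?thesis .
qed

theorem card_sign_vectors_eq_alternating_sum:
  fixes a :: "'i \<Rightarrow> 'a::euclidean_space"
  assumes "finite I" "subspace V"
  shows "int (card (sign_vector a I ` off_hyperplanes a I V))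
       = (\<Sum>B\<in>Pow I. (-1)^card B * (-1)^(dim V - dim (V \<inter> {x. \<forall>i\<in>B. a i \<bullet> x = 0})))"
  using assms
proof (induction I arbitrary: V rule: finite_induct)
  case empty
  have "sign_vector a {} ` off_hyperplanes a {} V = {\<lambda>_. undefined}"
    using subspace_0[OF empty.prems] by (force simp: sign_vector_def off_hyperplanes_def restrict_def)
  then show ?case by simp
next
  case (insert j I)
  let ?f = "\<lambda>V B. (-1::int)^card B * (-1)^(dim V - dim (V \<inter> {x. \<forall>i\<in>B. a i \<bullet> x = 0}))"
  have card_insert: "card (insert j B) = Suc (card B)" if "B \<in> Pow I" for B
    using that insert.hyps finite_subset by (auto intro: card_insert_disjoint)
  have sum_split: "(\<Sum>B\<in>Pow (insert j I). ?f V B) = (\<Sum>B\<in>Pow I. ?f V B) + (\<Sum>B\<in>Pow I. ?f V (insert j B))"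
    by (rule sum_Pow_insert[OF insert.hyps])
  show ?case
  proof (cases "\<exists>v\<in>V. a j \<bullet> v \<noteq> 0")
    case False
    then have "off_hyperplanes a (insert j I) V = {}" by (auto simp: off_hyperplanes_def)
    moreover have "?f V (insert j B) = - ?f V B" if "B \<in> Pow I" for B
    proof -
      have "V \<inter> {x. \<forall>i\<in>insert j B. a i \<bullet> x = 0} = V \<inter> {x. \<forall>i\<in>B. a i \<bullet> x = 0}"
        using False by auto
      then show ?thesis using card_insert[OF that] by simp
    qed
    ultimately show ?thesis
      using sum_split by (simp add: sum_negf)
  next
    case True
    then obtain v where v: "v \<in> V" "a j \<bullet> v \<noteq> 0" by blast
    let ?W = "V \<inter> {x. a j \<bullet> x = 0}"
    have "?f V (insert j B) = ?f ?W B" if "B \<in> Pow I" for B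
      unfolding dim_diff_section_insert[where a = a, OF insert.prems v] card_insert[OF that] by simp
    then have "(\<Sum>B\<in>Pow I. ?f V (insert j B)) = (\<Sum>B\<in>Pow I. ?f ?W B)" by (rule sum.cong[OF refl])
    moreover have "int (card (sign_vector a (insert j I) ` off_hyperplanes a (insert j I) V))
       = int (card (sign_vector a I ` off_hyperplanes a I V)) + int (card (sign_vector a I ` off_hyperplanes a I ?W))"
      using card_sign_vectors_insert[where a = a, OF insert.hyps insert.prems v] by simp
    ultimately show ?thesis
      using sum_split insert.IH[OF insert.prems] insert.IH[OF subspace_hyperplane_section[OF insert.prems]]
      by simp
  qed
qed

section \<open>Regions met by a subspace\<close>

lemma convex_sign_class:
  "convex {y. sign_vector a I y = sign_vector a I x}" if "x \<in> off_hyperplanes a I UNIV"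
proof -
  have "sign_vector a I ((1 - u) *\<^sub>R y + u *\<^sub>R z) = sign_vector a I x"
    if "sign_vector a I y = sign_vector a I x" "sign_vector a I z = sign_vector a I x" "0 \<le> u" "u \<le> 1"
    for y z u
    using that \<open>x \<in> off_hyperplanes a I UNIV\<close>
    by (auto simp: sign_vector_eq_iff off_hyperplanes_def sgn_0_0 intro!: sgn_inner_segment[THEN trans])
  then show ?thesis
    unfolding convex_alt by blast
qed

lemma connected_component_off_hyperplanes:
  assumes "x \<in> off_hyperplanes a I UNIV"
  shows "connected_component_set (off_hyperplanes a I UNIV) x = {y. sign_vector a I y = sign_vector a I x}"
proof
  let ?S = "off_hyperplanes a I UNIV" and ?C = "connected_component_set (off_hyperplanes a I UNIV) x"
  show "?C \<subseteq> {y. sign_vector a I y = sign_vector a I x}"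
  proof
    fix y assume y: "y \<in> ?C"
    have "sgn (a i \<bullet> y) = sgn (a i \<bullet> x)" if i: "i \<in> I" for i
    proof (rule ccontr)
      assume ne: "sgn (a i \<bullet> y) \<noteq> sgn (a i \<bullet> x)"
      have "a i \<bullet> x \<noteq> 0" "a i \<bullet> y \<noteq> 0"
        using assms connected_component_subset[of ?S x] y i by (auto simp: off_hyperplanes_def)
      with ne have "a i \<bullet> x < 0 \<and> 0 < a i \<bullet> y \<or> a i \<bullet> y < 0 \<and> 0 < a i \<bullet> x"
        by (auto simp: sgn_if split: if_splits)
      moreover have x: "x \<in> ?C" using assms by simp
      ultimately obtain z where "z \<in> ?C" "a i \<bullet> z = 0"
        using connected_ivt_hyperplane[OF connected_connected_component x y, of "a i" 0]
          connected_ivt_hyperplane[OF connected_connected_component y x, of "a i" 0]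
        by auto
      then show False
        using connected_component_subset[of ?S x] i by (auto simp: off_hyperplanes_def)
    qed
    then show "y \<in> {y. sign_vector a I y = sign_vector a I x}" by (simp add: sign_vector_eq_iff)
  qed
next
  show "{y. sign_vector a I y = sign_vector a I x} \<subseteq> connected_component_set (off_hyperplanes a I UNIV) x"
  proof (rule connected_component_maximal)
    show "connected {y. sign_vector a I y = sign_vector a I x}"
      by (rule convex_connected[OF convex_sign_class[OF assms]])
    show "{y. sign_vector a I y = sign_vector a I x} \<subseteq> off_hyperplanes a I UNIV"
      using off_hyperplanes_sign_vector_eq[OF UNIV_I assms] by blast
  qed simp
qed

lemma num_regions_cut_eq_card_sign_vectors:
  fixes A :: "(real^'n) set set"
  assumes "\<And>H. H \<in> A \<Longrightarrow> H = {x. a H \<bullet> x = 0}"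
  shows "num_regions_cut A L = card (sign_vector a A ` off_hyperplanes a A L)"
proof -
  let ?S = "off_hyperplanes a A UNIV" and ?cell = "\<lambda>\<sigma>. {y. sign_vector a A y = \<sigma>}"
  have "UNIV - \<Union>A = ?S" using assms by (auto simp: off_hyperplanes_def)
  then have "regions A = connected_component_set ?S ` ?S"
    unfolding regions_def components_def by simp
  also have "\<dots> = (\<lambda>x. ?cell (sign_vector a A x)) ` ?S"
    by (rule image_cong[OF refl connected_component_off_hyperplanes])
  finally have regions: "regions A = (\<lambda>x. ?cell (sign_vector a A x)) ` ?S" .
  have "{C \<in> regions A. C \<inter> L \<noteq> {}} = (\<lambda>x. ?cell (sign_vector a A x)) ` (?S \<inter> L)"
    unfolding regions
  proof
    show "{C \<in> (\<lambda>x. ?cell (sign_vector a A x)) ` ?S. C \<inter> L \<noteq> {}} \<subseteq> (\<lambda>x. ?cell (sign_vector a A x)) ` (?S \<inter> L)"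
    proof
      fix C assume "C \<in> {C \<in> (\<lambda>x. ?cell (sign_vector a A x)) ` ?S. C \<inter> L \<noteq> {}}"
      then obtain x y where "x \<in> ?S" "C = ?cell (sign_vector a A x)" "y \<in> C" "y \<in> L" by blast
      then have "y \<in> ?S \<inter> L" "C = ?cell (sign_vector a A y)"
        using off_hyperplanes_sign_vector_eq[OF UNIV_I] by auto
      then show "C \<in> (\<lambda>x. ?cell (sign_vector a A x)) ` (?S \<inter> L)" by blast
    qed
  qed auto
  also have "\<dots> = ?cell ` sign_vector a A ` off_hyperplanes a A L"
    by (auto simp: off_hyperplanes_def image_image)
  finally have "{C \<in> regions A. C \<inter> L \<noteq> {}} = ?cell ` sign_vector a A ` off_hyperplanes a A L" .
  moreover have "inj_on ?cell (sign_vector a A ` off_hyperplanes a A L)"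
    by (rule inj_onI) blast
  ultimately show ?thesis
    unfolding num_regions_cut_def by (simp add: card_image)
qed

lemma general_position_dim_diff:
  fixes A :: "(real^'n) set set"
  assumes "general_position A L d" "dim L = CARD('n) - d" "B \<subseteq> A"
  shows "dim L - dim (L \<inter> \<Inter>B) = min (CARD('n) - dim (\<Inter>B)) (CARD('n) - d)"
proof (cases "B = {}")
  case False
  then have "(\<Inter>H\<in>B. H \<inter> L) = L \<inter> \<Inter>B" by auto
  moreover have "dim (\<Inter>H\<in>B. H \<inter> L) = (if arr_rank B \<le> CARD('n) - d then CARD('n) - d - arr_rank B else 0)"
    using assms(1,3) False unfolding general_position_def by blast
  ultimately show ?thesis using assms(2) unfolding arr_rank_def by auto
qed simp

section \<open>Flats of arrangements of signed hyperplanes\<close>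

text \<open>Every flat of an arrangement of hyperplanes \<open>x\<^sub>i = \<plusminus>x\<^sub>j\<close> is a signed graph over a set \<open>J\<close>
  of free coordinates; this makes both its dimension and its integer points easy to count.\<close>

definition signed_graph :: "(real^'n) set \<Rightarrow> 'n set \<Rightarrow> bool" where
  "signed_graph W J \<longleftrightarrow>
     (\<forall>i. (\<forall>x\<in>W. x$i = 0) \<or> (\<exists>a\<in>J. \<exists>e. (e = 1 \<or> e = -1) \<and> (\<forall>x\<in>W. x$i = e * x$a)))
     \<and> (\<forall>y::real^'n. \<exists>x\<in>W. \<forall>a\<in>J. x$a = y$a)"

lemma signed_graphI:
  assumes "\<And>i. (\<forall>x\<in>W. x$i = 0) \<or> (\<exists>a\<in>J. \<exists>e. (e = 1 \<or> e = -1) \<and> (\<forall>x\<in>W. x$i = e * x$a))"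
    and "\<And>y. \<exists>x\<in>W. \<forall>a\<in>J. x$a = y$a"
  shows "signed_graph W J"
  using assms by (simp add: signed_graph_def)

lemma signed_graph_coordinateE:
  assumes "signed_graph W J"
  obtains "\<forall>x\<in>W. x$i = 0"
  | a e where "a \<in> J" "e = 1 \<or> e = -1" "\<forall>x\<in>W. x$i = e * x$a"
  using assms unfolding signed_graph_def by blast

lemma signed_graph_freeE:
  assumes "signed_graph W J"
  obtains x where "x \<in> W" "\<forall>a\<in>J. x$a = y$a"
  using assms unfolding signed_graph_def by blast

lemma signed_graph_UNIV: "signed_graph UNIV UNIV"
  unfolding signed_graph_def by (metis UNIV_I mult_1)

lemma signed_graph_coordinate_zero:
  fixes W :: "(real^'n) set"
  assumes "signed_graph W J" "b \<in> J"
  shows "signed_graph {x\<in>W. x$b = 0} (J - {b})"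
proof (rule signed_graphI)
  fix i
  from assms(1) show "(\<forall>x\<in>{x\<in>W. x$b = 0}. x$i = 0) \<or>
      (\<exists>a\<in>J - {b}. \<exists>e. (e = 1 \<or> e = -1) \<and> (\<forall>x\<in>{x\<in>W. x$b = 0}. x$i = e * x$a))"
  proof (cases rule: signed_graph_coordinateE[of _ _ i])
    case (2 a e)
    then show ?thesis by (cases "a = b") auto
  qed simp
next
  fix y :: "real^'n"
  obtain x where "x \<in> W" "\<forall>a\<in>J. x$a = (\<chi> k. if k = b then 0 else y$k) $ a"
    using assms(1) by (rule signed_graph_freeE)
  moreover from this(2) have "x$b = 0" "\<forall>a\<in>J - {b}. x$a = y$a"
    using assms(2) by auto
  ultimately show "\<exists>x\<in>{x\<in>W. x$b = 0}. \<forall>a\<in>J - {b}. x$a = y$a" by blast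
qed

lemma signed_graph_identify:
  fixes W :: "(real^'n) set"
  assumes "signed_graph W J" "a \<in> J" "b \<in> J" "a \<noteq> b" "c = 1 \<or> c = -1"
  shows "signed_graph {x\<in>W. x$a = c * x$b} (J - {a})"
proof (rule signed_graphI)
  fix i
  from assms(1) show "(\<forall>x\<in>{x\<in>W. x$a = c * x$b}. x$i = 0) \<or>
      (\<exists>a'\<in>J - {a}. \<exists>e. (e = 1 \<or> e = -1) \<and> (\<forall>x\<in>{x\<in>W. x$a = c * x$b}. x$i = e * x$a'))"
  proof (cases rule: signed_graph_coordinateE[of _ _ i])
    case (2 a' e)
    show ?thesis
    proof (cases "a' = a")
      case True
      then have "\<forall>x\<in>{x\<in>W. x$a = c * x$b}. x$i = (e * c) * x$b" and "e * c = 1 \<or> e * c = -1"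
        using 2 assms(5) by auto
      then show ?thesis using assms(3,4) by blast
    qed (use 2 in blast)
  qed simp
next
  fix y :: "real^'n"
  obtain x where "x \<in> W" "\<forall>a'\<in>J. x$a' = (\<chi> k. if k = a then c * y$b else y$k) $ a'"
    using assms(1) by (rule signed_graph_freeE)
  moreover from this(2) have "x$a = c * x$b" "\<forall>a'\<in>J - {a}. x$a' = y$a'"
    using assms(2-4) by auto
  ultimately show "\<exists>x\<in>{x\<in>W. x$a = c * x$b}. \<forall>a'\<in>J - {a}. x$a' = y$a'" by blast
qed

definition signed_hyperplane :: "'n \<Rightarrow> 'n \<Rightarrow> real \<Rightarrow> (real^'n) set" where
  "signed_hyperplane i j e = {x. x$i = e * x$j}"

definition signed_hyperplanes :: "(real^'n) set set" where
  "signed_hyperplanes = {signed_hyperplane i j e | i j e. e = 1 \<or> e = -1}"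

lemma signed_graph_Int_relation:
  fixes W :: "(real^'n) set"
  assumes W: "signed_graph W J" and "a \<in> J" "b \<in> J" and c: "c = 1 \<or> c = -1"
  shows "\<exists>J'. signed_graph {x\<in>W. x$a = c * x$b} J'"
proof (cases "a = b")
  case True
  show ?thesis
  proof (cases "c = 1")
    case True
    then have "{x\<in>W. x$a = c * x$b} = W" using \<open>a = b\<close> by auto
    then show ?thesis using W by auto
  next
    case False
    then have "{x\<in>W. x$a = c * x$b} = {x\<in>W. x$a = 0}" using c \<open>a = b\<close> by auto
    then show ?thesis using signed_graph_coordinate_zero[OF W \<open>a \<in> J\<close>] by auto
  qed
next
  case False
  then show ?thesis using signed_graph_identify[OF assms(1-3) False c] by blast
qed

lemma signed_graph_Int_signed_hyperplane:
  assumes W: "signed_graph W J" and e: "e = 1 \<or> e = -1"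
  shows "\<exists>J'. signed_graph (W \<inter> signed_hyperplane i j e) J'"
proof -
  have zero: "\<exists>J'. signed_graph (W \<inter> signed_hyperplane i j e) J'"
    if "b \<in> J" "W \<inter> signed_hyperplane i j e = {x\<in>W. x$b = 0}" for b
    using signed_graph_coordinate_zero[OF W \<open>b \<in> J\<close>] that(2) by auto
  from W show ?thesis
  proof (cases rule: signed_graph_coordinateE[of _ _ i])
    case zi: 1
    from W show ?thesis
    proof (cases rule: signed_graph_coordinateE[of _ _ j])
      case 1
      then have "W \<inter> signed_hyperplane i j e = W" using zi by (auto simp: signed_hyperplane_def)
      then show ?thesis using W by auto
    next
      case (2 b ej)
      then show ?thesis using zi e by (intro zero[of b]) (auto simp: signed_hyperplane_def)
    qed
  next
    case (2 a ei)
    from W show ?thesis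
    proof (cases rule: signed_graph_coordinateE[of _ _ j])
      case 1
      then show ?thesis using 2 by (intro zero[of a]) (auto simp: signed_hyperplane_def)
    next
      case (2 b ej)
      \<comment> \<open>on \<open>W\<close> the hyperplane reads \<open>x$a = ei * e * ej * x$b\<close>, as \<open>ei * ei = 1\<close>\<close>
      then have "W \<inter> signed_hyperplane i j e = {x\<in>W. x$a = (ei * e * ej) * x$b}"
        using \<open>ei = 1 \<or> ei = -1\<close> \<open>\<forall>x\<in>W. x$i = ei * x$a\<close>
        by (auto simp: signed_hyperplane_def)
      moreover have "ei * e * ej = 1 \<or> ei * e * ej = -1"
        using \<open>ei = 1 \<or> ei = -1\<close> 2 e by auto
      ultimately show ?thesis
        using signed_graph_Int_relation[OF W \<open>a \<in> J\<close> \<open>b \<in> J\<close>, of "ei * e * ej"] by simp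
    qed
  qed
qed

lemma signed_graph_Inter:
  assumes "finite B" "B \<subseteq> signed_hyperplanes"
  shows "\<exists>J. signed_graph (\<Inter>B) J"
  using assms
proof (induction B rule: finite_induct)
  case empty
  then show ?case using signed_graph_UNIV by auto
next
  case (insert H B)
  then obtain J where J: "signed_graph (\<Inter>B) J" by auto
  from insert(4) obtain i j e where H: "H = signed_hyperplane i j e" "e = 1 \<or> e = -1"
    by (auto simp: signed_hyperplanes_def)
  then show ?case using signed_graph_Int_signed_hyperplane[OF J H(2)] by (simp add: Int_commute)
qed

lemma signed_graph_eqI:
  assumes "signed_graph W J" "x \<in> W" "y \<in> W" "\<forall>a\<in>J. x$a = y$a"
  shows "x = y"
proof (rule vec_eq_iff[THEN iffD2], rule allI)
  fix i
  from assms(1) show "x$i = y$i"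
    by (cases rule: signed_graph_coordinateE[of _ _ i]) (use assms(2-4) in auto)
qed

lemma dim_signed_graph:
  fixes W :: "(real^'n) set"
  assumes "signed_graph W J" "subspace W"
  shows "dim W = card J"
proof -
  define f where "f = (\<lambda>x::real^'n. ((\<chi> k. if k \<in> J then x$k else 0) :: real^'n))"
  have lin: "linear f" unfolding f_def by (auto simp: linear_iff vec_eq_iff)
  have inj_W: "inj_on f W"
  proof (rule inj_onI)
    fix x y assume xy: "x \<in> W" "y \<in> W" "f x = f y"
    have "x$a = y$a" if "a \<in> J" for a
      using arg_cong[OF xy(3), of "\<lambda>z. z$a"] that by (simp add: f_def)
    then show "x = y" using signed_graph_eqI[OF assms(1) xy(1,2)] by blast
  qed
  have span_W: "span W = W" using assms(2) by (rule span_eq_iff[THEN iffD2])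
  have inj: "inj_on f (span W)" unfolding span_W by (rule inj_W)
  have img: "f ` W = {y. \<forall>k. k \<notin> J \<longrightarrow> y$k = 0}"
  proof
    show "{y. \<forall>k. k \<notin> J \<longrightarrow> y$k = 0} \<subseteq> f ` W"
    proof
      fix y :: "real^'n" assume y: "y \<in> {y. \<forall>k. k \<notin> J \<longrightarrow> y$k = 0}"
      obtain x where "x \<in> W" "\<forall>a\<in>J. x$a = y$a" using assms(1) by (rule signed_graph_freeE)
      moreover have "f x = y" using y calculation by (auto simp: f_def vec_eq_iff)
      ultimately show "y \<in> f ` W" by blast
    qed
  qed (auto simp: f_def)
  have "dim W = dim (f ` W)" using eucl.dim_image_eq[OF lin inj] by simp
  also have "\<dots> = card J"
  proof -
    have "vec.dim {x::real^'n. \<forall>i. i \<notin> J \<longrightarrow> x$i = 0} = card J" by (rule dim_substandard_cart)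
    then show ?thesis unfolding img dim_vec_eq .
  qed
  finally show ?thesis .
qed

lemma card_signed_graph_Int_box:
  fixes W :: "(real^'n) set"
  assumes "signed_graph W J" "finite G" "0 \<in> G" "\<And>g. g \<in> G \<Longrightarrow> -g \<in> G"
  shows "card (W \<inter> {x. \<forall>k. x$k \<in> G}) = card G ^ card J"
proof -
  let ?box = "{x. \<forall>k. x$k \<in> G}"
  have "bij_betw (\<lambda>x. restrict (vec_nth x) J) (W \<inter> ?box) (PiE J (\<lambda>_. G))"
    unfolding bij_betw_def
  proof
    show "inj_on (\<lambda>x. restrict (vec_nth x) J) (W \<inter> ?box)"
    proof (rule inj_onI)
      fix x y assume "x \<in> W \<inter> ?box" "y \<in> W \<inter> ?box" "restrict (vec_nth x) J = restrict (vec_nth y) J"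
      then show "x = y"
        using signed_graph_eqI[OF assms(1)] by (metis IntD1 restrict_apply')
    qed
    show "(\<lambda>x. restrict (vec_nth x) J) ` (W \<inter> ?box) = PiE J (\<lambda>_. G)"
    proof
      show "PiE J (\<lambda>_. G) \<subseteq> (\<lambda>x. restrict (vec_nth x) J) ` (W \<inter> ?box)"
      proof
        fix g assume g: "g \<in> PiE J (\<lambda>_. G)"
        obtain x where x: "x \<in> W" "\<forall>a\<in>J. x$a = (\<chi> k. g k) $ a"
          using assms(1) by (rule signed_graph_freeE)
        have "x$k \<in> G" for k
          using assms(1)
        proof (cases rule: signed_graph_coordinateE[of _ _ k])
          case (2 a e)
          then have "x$a \<in> G" using x g by (auto simp: PiE_iff)
          then show ?thesis using 2 x(1) assms(4) by auto
        qed (use x(1) assms(3) in auto)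
        moreover have "restrict (vec_nth x) J = g" using x g by (auto simp: PiE_def extensional_def)
        ultimately show "g \<in> (\<lambda>x. restrict (vec_nth x) J) ` (W \<inter> ?box)" using x by blast
      qed
    qed auto
  qed
  then have "card (W \<inter> ?box) = card (PiE J (\<lambda>_. G))" by (rule bij_betw_same_card)
  also have "\<dots> = card G ^ card J" by (simp add: card_PiE)
  finally show ?thesis .
qed

lemma card_Diff_Union_eq_alternating_sum:
  assumes "finite A" "finite X"
  shows "int (card (X - \<Union>A)) = (\<Sum>B\<in>Pow A. (-1)^card B * int (card (X \<inter> \<Inter>B)))"
  using assms
proof (induction A arbitrary: X rule: finite_induct)
  case (insert H A)
  have split: "X - \<Union>A = (X - \<Union>(insert H A)) \<union> ((X \<inter> H) - \<Union>A)" by auto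
  have "card (X - \<Union>A) = card (X - \<Union>(insert H A)) + card ((X \<inter> H) - \<Union>A)"
    unfolding split using insert.prems by (intro card_Un_disjoint) auto
  then have "int (card (X - \<Union>(insert H A))) = int (card (X - \<Union>A)) - int (card ((X \<inter> H) - \<Union>A))"
    by simp
  also have "\<dots> = (\<Sum>B\<in>Pow A. (-1)^card B * int (card (X \<inter> \<Inter>B)))
      - (\<Sum>B\<in>Pow A. (-1)^card B * int (card ((X \<inter> H) \<inter> \<Inter>B)))"
    using insert.prems by (simp add: insert.IH)
  also have "(\<Sum>B\<in>Pow A. (-1)^card B * int (card ((X \<inter> H) \<inter> \<Inter>B)))
      = - (\<Sum>B\<in>Pow A. (-1)^card (insert H B) * int (card (X \<inter> \<Inter>(insert H B))))"
  proof -
    have "card (insert H B) = Suc (card B)" if "B \<in> Pow A" for B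
      using that insert.hyps finite_subset by (auto intro: card_insert_disjoint)
    then show ?thesis
      unfolding sum_negf[symmetric] by (intro sum.cong refl) (simp add: Int_assoc)
  qed
  finally show ?case by (simp add: sum_Pow_insert[OF insert.hyps])
qed simp

lemma finite_box:
  assumes "finite G"
  shows "finite {x::real^'n. \<forall>k. x$k \<in> G}"
proof (rule finite_subset)
  show "{x::real^'n. \<forall>k. x$k \<in> G} \<subseteq> vec_lambda ` PiE UNIV (\<lambda>_. G)"
    by (auto intro!: image_eqI[of _ vec_lambda "vec_nth _"])
qed (use assms in \<open>simp add: finite_PiE\<close>)

lemma finite_signed_hyperplanes: "finite (signed_hyperplanes :: (real^'n) set set)"
proof -
  have eq: "signed_hyperplanes = (\<lambda>(i, j, e). signed_hyperplane i j e) ` (UNIV \<times> UNIV \<times> {1, -1::real})"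
    unfolding signed_hyperplanes_def by auto
  show ?thesis by (subst eq) simp
qed

lemma signed_hyperplanes_hyperplane:
  assumes "H \<in> signed_hyperplanes"
  shows "\<exists>v. H = {x. v \<bullet> x = 0}"
proof -
  obtain i j e where "H = signed_hyperplane i j e"
    using assms by (auto simp: signed_hyperplanes_def)
  then have "H = {x. (axis i 1 - e *\<^sub>R axis j 1) \<bullet> x = 0}"
    by (auto simp: signed_hyperplane_def inner_diff_left inner_axis')
  then show ?thesis ..
qed

lemma subspace_Inter_signed_hyperplanes:
  assumes "B \<subseteq> signed_hyperplanes"
  shows "subspace (\<Inter>B)"
  using assms signed_hyperplanes_hyperplane by (force intro: subspace_Inter subspace_hyperplane)

definition sym_ints :: "nat \<Rightarrow> real set" where
  "sym_ints s = real_of_int ` {- int s..int s}"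

lemma finite_sym_ints: "finite (sym_ints s)"
  by (simp add: sym_ints_def)

lemma zero_in_sym_ints: "0 \<in> sym_ints s"
  unfolding sym_ints_def by (rule image_eqI[of _ _ 0]) auto

lemma uminus_in_sym_ints: "g \<in> sym_ints s \<Longrightarrow> -g \<in> sym_ints s"
  unfolding sym_ints_def by (force intro: image_eqI[of _ _ "- _"])

lemma card_sym_ints: "card (sym_ints s) = 2 * s + 1"
proof -
  have "card (sym_ints s) = card {- int s..int s}"
    unfolding sym_ints_def by (rule card_image) (auto simp: inj_on_def)
  then show ?thesis by simp
qed

text \<open>Inclusion-exclusion over the hyperplanes, each flat containing \<open>(2 s + 1)\<^bsup>dim\<^esup>\<close> points of
  the box.\<close>

lemma alternating_sum_flats_eq_box_count:
  fixes A :: "(real^'n) set set"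
  assumes "A \<subseteq> signed_hyperplanes"
  shows "(\<Sum>B\<in>Pow A. (-1)^card B * (2 * int s + 1)^dim (\<Inter>B))
       = int (card ({x::real^'n. \<forall>k. x$k \<in> sym_ints s} - \<Union>A))"
proof -
  let ?X = "{x::real^'n. \<forall>k. x$k \<in> sym_ints s}"
  have finA: "finite A" using assms finite_signed_hyperplanes finite_subset by blast
  have "(2 * int s + 1)^dim (\<Inter>B) = int (card (?X \<inter> \<Inter>B))" if "B \<in> Pow A" for B
  proof -
    have B: "B \<subseteq> signed_hyperplanes" "finite B" using that assms finA finite_subset by auto
    then obtain J where J: "signed_graph (\<Inter>B) J" using signed_graph_Inter by blast
    have "card (\<Inter>B \<inter> ?X) = (2 * s + 1) ^ card J"
      using card_signed_graph_Int_box[OF J finite_sym_ints zero_in_sym_ints uminus_in_sym_ints]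
      by (simp add: card_sym_ints)
    moreover have "dim (\<Inter>B) = card J"
      using dim_signed_graph[OF J subspace_Inter_signed_hyperplanes[OF B(1)]] .
    ultimately show ?thesis by (simp add: Int_commute add.commute)
  qed
  then show ?thesis
    using card_Diff_Union_eq_alternating_sum[OF finA finite_box[OF finite_sym_ints]] by simp
qed

section \<open>The characteristic polynomial\<close>

lemma poly_eqI_infinite:
  fixes p q :: "'a::idom poly"
  assumes "infinite S" "\<And>x. x \<in> S \<Longrightarrow> poly p x = poly q x"
  shows "p = q"
proof (rule ccontr)
  assume "p \<noteq> q"
  then have "finite {x. poly (p - q) x = 0}" by (intro poly_roots_finite) simp
  moreover have "S \<subseteq> {x. poly (p - q) x = 0}" using assms(2) by auto
  ultimately show False using assms(1) finite_subset by blast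
qed

lemma poly_eq_sum_atMost:
  fixes p :: "'a::comm_semiring_1 poly"
  assumes "degree p \<le> N"
  shows "poly p x = (\<Sum>i\<le>N. coeff p i * x^i)"
  unfolding poly_altdef using assms by (intro sum.mono_neutral_left) (auto simp: coeff_eq_0)

lemma coeff_eq_of_nat_coeff:
  fixes p :: "nat poly" and q :: "int poly"
  assumes "\<And>x. int (poly p x) = poly q (int x)"
  shows "coeff q k = int (coeff p k)"
proof -
  define r where "r = (\<Sum>i\<le>degree p. monom (int (coeff p i)) i)"
  have "poly r (int x) = poly q (int x)" for x
    using assms[of x] unfolding r_def poly_altdef[of p] by (simp add: poly_sum poly_monom)
  then have "r = q"
    by (intro poly_eqI_infinite[of "range int"] range_inj_infinite) (auto simp: inj_on_def)
  moreover have "coeff r k = int (coeff p k)"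
    unfolding r_def by (auto simp: coeff_sum coeff_monom coeff_eq_0)
  ultimately show ?thesis by simp
qed

definition char_poly :: "(real^'n) set set \<Rightarrow> int poly" where
  "char_poly A = (\<Sum>B\<in>Pow A. monom ((-1)^card B) (dim (\<Inter>B)))"

lemma sum_Pow_eq_sum_coeff_char_poly:
  fixes A :: "(real^'n) set set"
  assumes "finite A"
  shows "(\<Sum>B\<in>Pow A. (-1)^card B * h (dim (\<Inter>B))) = (\<Sum>k\<le>CARD('n). coeff (char_poly A) k * h k)"
proof -
  have dim_le: "dim (\<Inter>B) \<le> CARD('n)" for B :: "(real^'n) set set"
    using dim_subset_UNIV[of "\<Inter>B"] by simp
  have "(\<Sum>k\<le>CARD('n). coeff (char_poly A) k * h k)
      = (\<Sum>B\<in>Pow A. \<Sum>k\<le>CARD('n). (if dim (\<Inter>B) = k then (-1)^card B else 0) * h k)"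
    unfolding char_poly_def coeff_sum coeff_monom sum_distrib_right by (rule sum.swap)
  also have "\<dots> = (\<Sum>B\<in>Pow A. (-1)^card B * h (dim (\<Inter>B)))"
    using dim_le by (simp add: if_distrib[of "\<lambda>c. c * _"] cong: if_cong)
  finally show ?thesis ..
qed

lemma poly_char_poly_eq_box_count:
  assumes "A \<subseteq> signed_hyperplanes"
  shows "poly (char_poly A) (2 * int s + 1) = int (card ({x::real^'n. \<forall>k. x$k \<in> sym_ints s} - \<Union>A))"
  unfolding char_poly_def poly_sum poly_monom
  using alternating_sum_flats_eq_box_count[OF assms] by simp

lemma coeff_char_poly_from_box_count:
  fixes A :: "(real^'n) set set" and p :: "int poly"
  assumes A: "A \<subseteq> signed_hyperplanes" and deg: "degree p \<le> CARD('n)"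
    and count: "\<And>s. int (card ({x::real^'n. \<forall>k. x$k \<in> sym_ints s} - \<Union>A))
                  = (-1)^CARD('n) * poly p (-(2 * int s + 1))"
  shows "coeff (char_poly A) k = (-1)^(CARD('n) + k) * coeff p k"
proof -
  define n where "n = CARD('n)"
  define q where "q = (\<Sum>k\<le>n. monom ((-1)^(n + k) * coeff p k) k)"
  have "poly q x = (-1)^n * poly p (-x)" for x
  proof -
    have "(-1)^n * poly p (-x) = (\<Sum>k\<le>n. (-1)^n * (coeff p k * (-x)^k))"
      using deg by (simp add: poly_eq_sum_atMost n_def sum_distrib_left)
    also have "\<dots> = (\<Sum>k\<le>n. (-1)^(n + k) * coeff p k * x^k)"
      by (rule sum.cong[OF refl]) (simp add: power_minus[of x] power_add mult_ac)
    finally show ?thesis unfolding q_def by (simp add: poly_sum poly_monom)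
  qed
  then have "char_poly A = q"
    using count poly_char_poly_eq_box_count[OF A]
    by (intro poly_eqI_infinite[of "range (\<lambda>s. 2 * int s + 1)"])
      (auto intro!: range_inj_infinite inj_onI simp: n_def)
  then show ?thesis
    using deg by (auto simp: q_def coeff_sum coeff_monom coeff_eq_0 n_def)
qed

lemma minus_one_power_min_eq: "k \<le> n \<Longrightarrow> d \<le> n \<Longrightarrow> (-1::int)^(n+k) * c * (-1)^min (n-k) (n-d) = (-1)^(k+d) * c + (if d < k \<and> odd (k - d) then 2 * c else 0)"
proof -
  assume "k \<le> n" "d \<le> n"
  then have "(-1::int)^(n+k) * (-1)^min (n-k) (n-d) = (if d \<le> k then 1 else (-1)^(k+d))"
    unfolding power_add[symmetric] minus_one_power_iff by (auto simp: min_def)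
  moreover have "(-1::int)^(k+d) = (-1)^(k-d)" if "d \<le> k"
    using that unfolding minus_one_power_iff by auto
  ultimately show ?thesis
    by (cases "d \<le> k") (auto simp: minus_one_power_iff mult_ac)
qed

lemma sum_sign_min_eq_twice_sum_odd:
  fixes c :: "nat \<Rightarrow> int"
  assumes "d \<le> n" "(\<Sum>k\<le>n. (-1)^k * c k) = 0"
  shows "(\<Sum>k\<le>n. (-1)^(n+k) * c k * (-1)^min (n-k) (n-d))
       = 2 * (\<Sum>k | k \<le> n \<and> d < k \<and> odd (k - d). c k)"
proof -
  have "(\<Sum>k\<le>n. (-1)^(n+k) * c k * (-1)^min (n-k) (n-d))
      = (-1)^d * (\<Sum>k\<le>n. (-1)^k * c k) + (\<Sum>k\<le>n. if d < k \<and> odd (k - d) then 2 * c k else 0)"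
  proof -
    have "(\<Sum>k\<le>n. (-1)^(n+k) * c k * (-1)^min (n-k) (n-d))
        = (\<Sum>k\<le>n. (-1)^(k+d) * c k + (if d < k \<and> odd (k - d) then 2 * c k else 0))"
      using assms(1) by (intro sum.cong refl) (simp add: minus_one_power_min_eq)
    then show ?thesis by (simp add: sum.distrib sum_distrib_left power_add mult_ac)
  qed
  also have "\<dots> = (\<Sum>k | k \<le> n \<and> d < k \<and> odd (k - d). 2 * c k)"
    using assms(2) by (simp add: sum.inter_filter[symmetric] atMost_def conj_commute)
  finally show ?thesis by (simp add: sum_distrib_left)
qed

lemma int_num_regions_cut_eq_sum_coeff_char_poly:
  fixes A :: "(real^'n) set set"
  assumes A: "finite A" "\<And>H. H \<in> A \<Longrightarrow> \<exists>v. H = {x. v \<bullet> x = 0}"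
    and L: "subspace L" "dim L = CARD('n) - d" and gp: "general_position A L d"
  shows "int (num_regions_cut A L)
       = (\<Sum>k\<le>CARD('n). coeff (char_poly A) k * (-1)^min (CARD('n) - k) (CARD('n) - d))"
proof -
  obtain a where a: "\<And>H. H \<in> A \<Longrightarrow> H = {x. a H \<bullet> x = 0}" using A(2) by metis
  have zeros: "{x. \<forall>H\<in>B. a H \<bullet> x = 0} = \<Inter>B" if "B \<subseteq> A" for B
    using a that by blast
  have "int (num_regions_cut A L) = int (card (sign_vector a A ` off_hyperplanes a A L))"
    using num_regions_cut_eq_card_sign_vectors[OF a] by simp
  also have "\<dots> = (\<Sum>B\<in>Pow A. (-1)^card B * (-1)^(dim L - dim (L \<inter> {x. \<forall>H\<in>B. a H \<bullet> x = 0})))"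
    by (rule card_sign_vectors_eq_alternating_sum[OF A(1) L(1)])
  also have "\<dots> = (\<Sum>B\<in>Pow A. (-1)^card B * (-1)^min (CARD('n) - dim (\<Inter>B)) (CARD('n) - d))"
    using general_position_dim_diff[OF gp L(2)] zeros by (intro sum.cong) auto
  also have "\<dots> = (\<Sum>k\<le>CARD('n). coeff (char_poly A) k * (-1)^min (CARD('n) - k) (CARD('n) - d))"
    by (rule sum_Pow_eq_sum_coeff_char_poly[OF A(1)])
  finally show ?thesis .
qed

theorem num_regions_cut_eq_twice_sum_odd_coeffs:
  fixes A :: "(real^'n) set set" and p :: "nat poly" and q :: "int poly"
  assumes A: "A \<subseteq> signed_hyperplanes"
    and L: "subspace L" "dim L = CARD('n) - d" "d \<le> CARD('n)" and gp: "general_position A L d"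
    and pq: "\<And>x. int (poly p x) = poly q (int x)" and deg: "degree q \<le> CARD('n)"
    and count: "\<And>s. int (card ({x::real^'n. \<forall>k. x$k \<in> sym_ints s} - \<Union>A))
                  = (-1)^CARD('n) * poly q (-(2 * int s + 1))"
    and root: "poly q (-1) = 0"
  shows "num_regions_cut A L = 2 * (\<Sum>k | k \<le> CARD('n) \<and> d < k \<and> odd (k - d). coeff p k)"
proof -
  have finA: "finite A" using A finite_signed_hyperplanes finite_subset by blast
  have hyperplanes: "\<exists>v. H = {x. v \<bullet> x = 0}" if "H \<in> A" for H
    using A signed_hyperplanes_hyperplane that by blast
  have coeff: "coeff (char_poly A) k = (-1)^(CARD('n) + k) * int (coeff p k)" for k
    using coeff_char_poly_from_box_count[OF A deg count] coeff_eq_of_nat_coeff[OF pq] by simp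
  have "(\<Sum>k\<le>CARD('n). (-1)^k * int (coeff p k)) = 0"
    using root poly_eq_sum_atMost[OF deg] coeff_eq_of_nat_coeff[OF pq] by (simp add: mult.commute)
  then have "int (num_regions_cut A L) = 2 * (\<Sum>k | k \<le> CARD('n) \<and> d < k \<and> odd (k - d). int (coeff p k))"
    using int_num_regions_cut_eq_sum_coeff_char_poly[OF finA hyperplanes L(1,2) gp]
      sum_sign_min_eq_twice_sum_odd[OF L(3)]
    by (simp add: coeff)
  then show ?thesis by (simp flip: of_nat_sum)
qed

section \<open>Integer points off the reflection arrangements\<close>

definition block_injective :: "'k set \<Rightarrow> 'a set \<Rightarrow> ('a \<Rightarrow> 'a set) \<Rightarrow> ('k \<Rightarrow> 'a) set" where
  "block_injective K G E = {f \<in> PiE K (\<lambda>_. G). \<forall>k\<in>K. \<forall>k'\<in>K. k \<noteq> k' \<longrightarrow> f k' \<notin> E (f k)}"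

text \<open>In the applications the blocks \<open>E w\<close> are \<open>{w}\<close> and \<open>{w, -w}\<close>.\<close>

locale uniform_blocks =
  fixes G :: "'a set" and E :: "'a \<Rightarrow> 'a set" and m :: nat
  assumes finite_G: "finite G"
    and block_subset: "\<And>w. w \<in> G \<Longrightarrow> E w \<subseteq> G"
    and card_block: "\<And>w. w \<in> G \<Longrightarrow> card (E w) = m"
    and block_sym: "\<And>w w'. w \<in> G \<Longrightarrow> w' \<in> G \<Longrightarrow> w' \<in> E w \<longleftrightarrow> w \<in> E w'"
    and block_disjoint: "\<And>w w'. w \<in> G \<Longrightarrow> w' \<in> G \<Longrightarrow> w' \<notin> E w \<Longrightarrow> E w \<inter> E w' = {}"
begin

lemma card_Diff_blocks:
  assumes "finite K" "f \<in> block_injective K G E"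
  shows "card (G - (\<Union>k\<in>K. E (f k))) = card G - m * card K"
proof -
  have fG: "f k \<in> G" if "k \<in> K" for k using assms(2) that by (auto simp: block_injective_def)
  have "card (\<Union>k\<in>K. E (f k)) = (\<Sum>k\<in>K. card (E (f k)))"
  proof (rule card_UN_disjoint[OF assms(1)])
    show "\<forall>k\<in>K. finite (E (f k))" using block_subset fG finite_G finite_subset by blast
    show "\<forall>k\<in>K. \<forall>k'\<in>K. k \<noteq> k' \<longrightarrow> E (f k) \<inter> E (f k') = {}"
      using assms(2) fG block_disjoint by (auto simp: block_injective_def)
  qed
  also have "\<dots> = m * card K" using card_block fG by simp
  finally have "card (\<Union>k\<in>K. E (f k)) = m * card K" .
  moreover have "(\<Union>k\<in>K. E (f k)) \<subseteq> G" using block_subset fG by auto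
  ultimately show ?thesis using finite_G by (simp add: card_Diff_subset finite_subset)
qed

lemma block_injective_insert:
  assumes "k \<notin> K"
  shows "block_injective (insert k K) G E
       = (\<lambda>(f, v). f(k := v)) ` Sigma (block_injective K G E) (\<lambda>f. G - (\<Union>k'\<in>K. E (f k')))"
proof (rule set_eqI, rule iffI)
  fix g assume g: "g \<in> block_injective (insert k K) G E"
  let ?f = "g(k := undefined)"
  have "?f \<in> block_injective K G E"
    using g assms by (auto simp: block_injective_def PiE_def extensional_def)
  moreover have "g k \<in> G - (\<Union>k'\<in>K. E (?f k'))"
    using g assms by (auto simp: block_injective_def)
  ultimately show "g \<in> (\<lambda>(f, v). f(k := v)) ` Sigma (block_injective K G E) (\<lambda>f. G - (\<Union>k'\<in>K. E (f k')))"
    by (intro rev_image_eqI[of "(?f, g k)"]) auto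
next
  fix g assume "g \<in> (\<lambda>(f, v). f(k := v)) ` Sigma (block_injective K G E) (\<lambda>f. G - (\<Union>k'\<in>K. E (f k')))"
  then obtain f v where f: "f \<in> block_injective K G E" and v: "v \<in> G" "\<And>k'. k' \<in> K \<Longrightarrow> v \<notin> E (f k')"
    and g: "g = f(k := v)" by auto
  have "f k' \<notin> E v" if "k' \<in> K" for k'
    using block_sym[of "f k'" v] f that v by (auto simp: block_injective_def)
  then show "g \<in> block_injective (insert k K) G E"
    using f v assms unfolding g block_injective_def by (auto simp: PiE_def extensional_def)
qed

lemma card_block_injective_insert:
  assumes "finite K" "k \<notin> K"
  shows "card (block_injective (insert k K) G E) = card (block_injective K G E) * (card G - m * card K)"
proof -
  have inj: "inj_on (\<lambda>(f, v). f(k := v)) (Sigma (block_injective K G E) (\<lambda>f. G - (\<Union>k'\<in>K. E (f k'))))"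
  proof (rule inj_onI, clarify)
    fix f v f' v' assume "f \<in> block_injective K G E" "f' \<in> block_injective K G E" "f(k := v) = f'(k := v')"
    moreover from this(1,2) have "f k = undefined" "f' k = undefined"
      using assms(2) by (auto simp: block_injective_def PiE_def extensional_def)
    ultimately show "f = f' \<and> v = v'" by (metis fun_upd_idem_iff fun_upd_upd fun_upd_same)
  qed
  have "finite (block_injective K G E)"
    by (rule finite_subset[of _ "PiE K (\<lambda>_. G)"])
      (auto simp: block_injective_def intro: finite_PiE assms(1) finite_G)
  then have "card (Sigma (block_injective K G E) (\<lambda>f. G - (\<Union>k'\<in>K. E (f k'))))
      = (\<Sum>f\<in>block_injective K G E. card (G - (\<Union>k'\<in>K. E (f k'))))"
    using finite_G by (intro card_SigmaI) auto
  then show ?thesis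
    using card_image[OF inj] card_Diff_blocks[OF assms(1)]
    by (simp add: block_injective_insert[OF assms(2)])
qed

lemma card_block_injective:
  assumes "finite K"
  shows "card (block_injective K G E) = (\<Prod>i<card K. card G - m * i)"
  using assms
proof (induction K rule: finite_induct)
  case empty
  have e: "block_injective {} G E = {\<lambda>_. undefined}" by (auto simp: block_injective_def)
  show ?case by (subst e) simp
next
  case (insert k K)
  then show ?case by (simp add: card_block_injective_insert mult.commute)
qed

end

lemma card_vectors_block_injective:
  "card {x::('a, 'n::finite) vec. (\<forall>k. x$k \<in> G) \<and> (\<forall>i j. i \<noteq> j \<longrightarrow> x$j \<notin> E (x$i))}
     = card (block_injective (UNIV::'n set) G E)"
proof -
  let ?X = "{x::('a, 'n::finite) vec. (\<forall>k. x$k \<in> G) \<and> (\<forall>i j. i \<noteq> j \<longrightarrow> x$j \<notin> E (x$i))}"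
  have "vec_nth ` ?X = block_injective UNIV G E"
  proof
    show "block_injective UNIV G E \<subseteq> vec_nth ` ?X"
    proof
      fix f :: "'n \<Rightarrow> 'a" assume "f \<in> block_injective UNIV G E"
      then have "vec_lambda f \<in> ?X" by (auto simp: block_injective_def PiE_iff)
      then show "f \<in> vec_nth ` ?X" by (rule image_eqI[rotated]) (simp add: fun_eq_iff)
    qed
  qed (auto simp: block_injective_def PiE_iff)
  moreover have inj: "inj_on vec_nth ?X" by (auto simp: inj_on_def vec_eq_iff)
  ultimately show ?thesis using card_image[OF inj] by simp
qed

lemma uniform_blocks_singletons: "uniform_blocks (sym_ints s) (\<lambda>w. {w}) 1"
  by unfold_locales (auto simp: finite_sym_ints)

lemma uniform_blocks_sign_pairs: "uniform_blocks (sym_ints s - {0}) (\<lambda>w. {w, -w}) 2"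
  by unfold_locales (auto simp: finite_sym_ints uminus_in_sym_ints)

lemma card_sym_ints_Diff_zero: "card (sym_ints s - {0}) = 2 * s"
  by (simp add: card_Diff_singleton card_sym_ints zero_in_sym_ints)

lemma mem_Union_arrA: "x \<in> \<Union>(arrA :: (real^'n) set set) \<longleftrightarrow> (\<exists>i j. i \<noteq> j \<and> x$j = x$i)"
proof
  assume "x \<in> \<Union>arrA"
  then obtain i j where "i \<noteq> j" "x$i = x$j" unfolding arrA_def by blast
  then show "\<exists>i j. i \<noteq> j \<and> x$j = x$i"
    by (intro exI[of _ j] exI[of _ i]) auto
next
  assume "\<exists>i j. i \<noteq> j \<and> x$j = x$i"
  then obtain i j where "i \<noteq> j" "x \<in> {y. y$j = y$i}" by auto
  moreover from this(1) have "{y::real^'n. y$j = y$i} \<in> arrA" unfolding arrA_def by blast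
  ultimately show "x \<in> \<Union>arrA" by blast
qed

lemma mem_Union_arrD:
  "x \<in> \<Union>(arrD :: (real^'n) set set) \<longleftrightarrow> (\<exists>i j. i \<noteq> j \<and> (x$j = x$i \<or> x$j = - x$i))"
proof
  assume "x \<in> \<Union>arrD"
  then obtain i j where "i \<noteq> j" "x$i = x$j \<or> x$i = - x$j" unfolding arrD_def by blast
  then show "\<exists>i j. i \<noteq> j \<and> (x$j = x$i \<or> x$j = - x$i)"
    by (intro exI[of _ j] exI[of _ i]) auto
next
  assume "\<exists>i j. i \<noteq> j \<and> (x$j = x$i \<or> x$j = - x$i)"
  then obtain i j where "i \<noteq> j" "x \<in> {y. y$j = y$i} \<or> x \<in> {y. y$j = - y$i}" by auto
  moreover from this(1) have "{y::real^'n. y$j = y$i} \<in> arrD" "{y::real^'n. y$j = - y$i} \<in> arrD"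
    unfolding arrD_def by blast+
  ultimately show "x \<in> \<Union>arrD" by blast
qed

lemma arrB_eq_arrD_Un: "(arrB :: (real^'n) set set) = arrD \<union> {{x. x$k = 0} | k. True}"
  unfolding arrB_def arrD_def by simp

lemma mem_Union_arrB:
  "x \<in> \<Union>(arrB :: (real^'n) set set) \<longleftrightarrow> x \<in> \<Union>(arrD :: (real^'n) set set) \<or> (\<exists>k. x$k = 0)"
  unfolding arrB_eq_arrD_Un by auto

lemma box_Diff_arrA:
  "{x::real^'n. \<forall>k. x$k \<in> G} - \<Union>arrA = {x. (\<forall>k. x$k \<in> G) \<and> (\<forall>i j. i \<noteq> j \<longrightarrow> x$j \<notin> {x$i})}"
  by (rule set_eqI) (simp only: Diff_iff mem_Collect_eq mem_Union_arrA, auto)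

lemma box_Diff_arrD:
  "{x::real^'n. \<forall>k. x$k \<in> G} - \<Union>arrD = {x. (\<forall>k. x$k \<in> G) \<and> (\<forall>i j. i \<noteq> j \<longrightarrow> x$j \<notin> {x$i, -x$i})}"
  by (rule set_eqI) (simp only: Diff_iff mem_Collect_eq mem_Union_arrD, auto)

lemma box_Diff_arrB:
  "{x::real^'n. \<forall>k. x$k \<in> G} - \<Union>arrB
     = {x. (\<forall>k. x$k \<in> G - {0}) \<and> (\<forall>i j. i \<noteq> j \<longrightarrow> x$j \<notin> {x$i, -x$i})}"
  by (rule set_eqI) (simp only: Diff_iff mem_Collect_eq mem_Union_arrB mem_Union_arrD, auto)

lemma card_box_Diff_arrA:
  "card ({x::real^'n. \<forall>k. x$k \<in> sym_ints s} - \<Union>arrA) = (\<Prod>i<CARD('n). 2 * s + 1 - i)"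
proof -
  have "card ({x::real^'n. \<forall>k. x$k \<in> sym_ints s} - \<Union>arrA)
      = card (block_injective (UNIV :: 'n set) (sym_ints s) (\<lambda>w. {w}))"
    unfolding box_Diff_arrA by (rule card_vectors_block_injective[of _ "\<lambda>w. {w}"])
  also have "\<dots> = (\<Prod>i<CARD('n). card (sym_ints s) - 1 * i)"
    by (rule uniform_blocks.card_block_injective[OF uniform_blocks_singletons finite])
  finally show ?thesis by (simp add: card_sym_ints)
qed

lemma card_arrB_box:
  "card {x::real^'n. (\<forall>k. x$k \<in> sym_ints s - {0}) \<and> (\<forall>i j. i \<noteq> j \<longrightarrow> x$j \<notin> {x$i, -x$i})}
     = (\<Prod>i<CARD('n). 2 * s - 2 * i)"
proof -
  have "card {x::real^'n. (\<forall>k. x$k \<in> sym_ints s - {0}) \<and> (\<forall>i j. i \<noteq> j \<longrightarrow> x$j \<notin> {x$i, -x$i})}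
      = card (block_injective (UNIV :: 'n set) (sym_ints s - {0}) (\<lambda>w. {w, -w}))"
    by (rule card_vectors_block_injective[of _ "\<lambda>w. {w, -w}"])
  also have "\<dots> = (\<Prod>i<CARD('n). card (sym_ints s - {0}) - 2 * i)"
    by (rule uniform_blocks.card_block_injective[OF uniform_blocks_sign_pairs finite])
  finally show ?thesis by (simp add: card_sym_ints_Diff_zero)
qed

lemma card_box_Diff_arrB:
  "card ({x::real^'n. \<forall>k. x$k \<in> sym_ints s} - \<Union>arrB) = (\<Prod>i<CARD('n). 2 * s - 2 * i)"
  unfolding box_Diff_arrB by (rule card_arrB_box)

lemma card_arrD_box_zero_at:
  fixes k :: "'n::finite"
  shows "card {x::real^'n. (\<forall>i. x$i \<in> sym_ints s) \<and> (\<forall>i j. i \<noteq> j \<longrightarrow> x$j \<notin> {x$i, -x$i}) \<and> x$k = 0}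
     = (\<Prod>i<CARD('n) - 1. 2 * s - 2 * i)"
proof -
  let ?Z = "{x::real^'n. (\<forall>i. x$i \<in> sym_ints s) \<and> (\<forall>i j. i \<noteq> j \<longrightarrow> x$j \<notin> {x$i, -x$i}) \<and> x$k = 0}"
  let ?F = "block_injective (UNIV - {k}) (sym_ints s - {0}) (\<lambda>w. {w, -w})"
  let ?f = "\<lambda>x::real^'n. restrict (vec_nth x) (UNIV - {k})"
  have image: "?f ` ?Z = ?F"
  proof
    show "?f ` ?Z \<subseteq> ?F"
    proof (rule image_subsetI)
      fix x assume x: "x \<in> ?Z"
      have "x$i \<noteq> 0" if "i \<noteq> k" for i
      proof -
        from x have "\<forall>i j. i \<noteq> j \<longrightarrow> x$j \<notin> {x$i, -x$i}" by simp
        then have "x$i \<notin> {x$k, -x$k}" using that by metis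
        with x show ?thesis by simp
      qed
      with x show "?f x \<in> ?F" by (auto simp: block_injective_def PiE_iff)
    qed
    show "?F \<subseteq> ?f ` ?Z"
    proof
      fix g assume g: "g \<in> ?F"
      then have g_range: "g i \<in> sym_ints s - {0}" if "i \<noteq> k" for i
        using that by (auto simp: block_injective_def PiE_iff)
      from g have g_pairs: "g j \<notin> {g i, - g i}" if "i \<noteq> k" "j \<noteq> k" "i \<noteq> j" for i j
        using that by (auto simp: block_injective_def)
      define x :: "real^'n" where "x = (\<chi> i. if i = k then 0 else g i)"
      have "x$i \<in> sym_ints s" for i
        using g_range zero_in_sym_ints by (cases "i = k") (auto simp: x_def)
      moreover have "x$j \<notin> {x$i, -x$i}" if "i \<noteq> j" for i j
        using g_range[of i] g_range[of j] g_pairs[of i j] that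
        by (cases "i = k"; cases "j = k") (auto simp: x_def)
      ultimately have "x \<in> ?Z" by (simp add: x_def)
      moreover have "?f x = g"
        using g by (auto simp: x_def block_injective_def PiE_iff extensional_def)
      ultimately show "g \<in> ?f ` ?Z" by blast
    qed
  qed
  have inj: "inj_on ?f ?Z"
  proof (rule inj_onI)
    fix x y assume xy: "x \<in> ?Z" "y \<in> ?Z" "?f x = ?f y"
    have "x$i = y$i" for i
      using xy(1,2) fun_cong[OF xy(3), of i] by (cases "i = k") auto
    then show "x = y" by (simp add: vec_eq_iff)
  qed
  have "card ?Z = card ?F" using card_image[OF inj] image by simp
  also have "\<dots> = (\<Prod>i<card (UNIV - {k} :: 'n set). card (sym_ints s - {0}) - 2 * i)"
    by (rule uniform_blocks.card_block_injective[OF uniform_blocks_sign_pairs]) simp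
  finally show ?thesis by (simp add: card_sym_ints_Diff_zero)
qed

text \<open>At most one coordinate of a point off \<open>\<A>(D\<^sub>n)\<close> vanishes: either none does, as off
  \<open>\<A>(B\<^sub>n)\<close>, or exactly one.\<close>

lemma card_box_Diff_arrD:
  "card ({x::real^'n. \<forall>k. x$k \<in> sym_ints s} - \<Union>arrD)
     = (\<Prod>i<CARD('n). 2 * s - 2 * i) + CARD('n) * (\<Prod>i<CARD('n) - 1. 2 * s - 2 * i)"
proof -
  let ?D = "{x::real^'n. (\<forall>i. x$i \<in> sym_ints s) \<and> (\<forall>i j. i \<noteq> j \<longrightarrow> x$j \<notin> {x$i, -x$i})}"
  let ?B = "{x::real^'n. (\<forall>k. x$k \<in> sym_ints s - {0}) \<and> (\<forall>i j. i \<noteq> j \<longrightarrow> x$j \<notin> {x$i, -x$i})}"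
  let ?Z = "\<lambda>k. {x::real^'n. (\<forall>i. x$i \<in> sym_ints s) \<and> (\<forall>i j. i \<noteq> j \<longrightarrow> x$j \<notin> {x$i, -x$i}) \<and> x$k = 0}"
  have split: "?D = ?B \<union> (\<Union>k. ?Z k)" by auto
  have fin: "finite ?D"
    by (rule finite_subset[OF _ finite_box[OF finite_sym_ints]]) auto
  have disjoint: "?Z i \<inter> ?Z j = {}" if "i \<noteq> j" for i j
    using that by force
  have "card ?D = card ?B + card (\<Union>k. ?Z k)"
    unfolding split by (rule card_Un_disjoint) (use fin split in auto)
  also have "card (\<Union>k. ?Z k) = (\<Sum>k\<in>UNIV. card (?Z k))"
    using fin disjoint by (intro card_UN_disjoint) (auto intro: finite_subset[of _ ?D])
  also have "\<dots> = CARD('n) * (\<Prod>i<CARD('n) - 1. 2 * s - 2 * i)"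
    by (subst card_arrD_box_zero_at) simp
  finally show ?thesis
    unfolding box_Diff_arrD card_arrB_box .
qed

section \<open>The reflection arrangements\<close>

text \<open>The factor with index \<open>i\<^sub>0\<close> vanishes on both sides, so the truncated subtraction of
  \<open>nat\<close> is harmless.\<close>

lemma int_prod_diff_mult:
  fixes c m :: nat
  assumes "c = m * i\<^sub>0"
  shows "int (\<Prod>i<n. c - m * i) = (\<Prod>i<n. int c - int m * int i)"
proof (cases "n \<le> i\<^sub>0")
  case True
  then have "m * i \<le> c" if "i < n" for i using that assms by simp
  then show ?thesis by (simp add: of_nat_prod of_nat_diff)
next
  case False
  then have "i\<^sub>0 \<in> {..<n}" by simp
  then have "(\<Prod>i<n. c - m * i) = 0" "(\<Prod>i<n. int c - int m * int i) = 0"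
    using assms by (auto intro!: prod_zero bexI[of _ i\<^sub>0])
  then show ?thesis by (simp only: of_nat_0)
qed

lemma degree_prod_linear_le: "degree (\<Prod>i<n. [:c i, 1:]) \<le> n"
  by (rule order.trans[OF degree_prod_sum_le]) simp_all

lemma poly_prod_linear_uminus:
  fixes c :: "nat \<Rightarrow> 'a::comm_ring_1"
  shows "(-1)^n * poly (\<Prod>i<n. [:c i, 1:]) (- t) = (\<Prod>i<n. t - c i)"
proof -
  have "poly (\<Prod>i<n. [:c i, 1:]) (- t) = (-1)^n * (\<Prod>i<n. t - c i)"
    using prod_uminus[of "\<lambda>i. t - c i" "{..<n}"] by (simp add: poly_prod)
  then show ?thesis by (simp flip: power_mult_distrib)
qed

lemma arrA_signed_hyperplanes: "(arrA :: (real^'n) set set) \<subseteq> signed_hyperplanes"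
proof
  fix H :: "(real^'n) set" assume "H \<in> arrA"
  then obtain i j where "H = {x. x$i = x$j}" unfolding arrA_def by blast
  then have "H = signed_hyperplane i j 1" by (simp add: signed_hyperplane_def)
  then show "H \<in> signed_hyperplanes" unfolding signed_hyperplanes_def by blast
qed

lemma arrB_signed_hyperplanes: "(arrB :: (real^'n) set set) \<subseteq> signed_hyperplanes"
proof
  fix H :: "(real^'n) set" assume "H \<in> arrB"
  then consider i j where "H = {x. x$i = x$j}" | i j where "H = {x. x$i = - x$j}"
    | k where "H = {x. x$k = 0}"
    unfolding arrB_def by blast
  then have "\<exists>i j e. (e = 1 \<or> e = -1) \<and> H = signed_hyperplane i j e"
  proof cases
    case (1 i j)
    then show ?thesis by (intro exI[of _ i] exI[of _ j] exI[of _ 1]) (simp add: signed_hyperplane_def)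
  next
    case (2 i j)
    then show ?thesis by (intro exI[of _ i] exI[of _ j] exI[of _ "-1"]) (simp add: signed_hyperplane_def)
  next
    case (3 k)
    then show ?thesis by (intro exI[of _ k] exI[of _ k] exI[of _ "-1"]) (auto simp: signed_hyperplane_def)
  qed
  then show "H \<in> signed_hyperplanes" unfolding signed_hyperplanes_def by blast
qed

lemma arrD_signed_hyperplanes: "(arrD :: (real^'n) set set) \<subseteq> signed_hyperplanes"
  using arrB_signed_hyperplanes by (auto simp: arrB_eq_arrD_Un)

theorem num_regions_cut_arrA:
  fixes L :: "(real^'n) set"
  assumes "subspace L" "dim L = CARD('n) - d" "d \<le> CARD('n)"
    and "general_position (arrA :: (real^'n) set set) L d" "2 \<le> CARD('n)"
  shows "num_regions_cut arrA L = 2 * (\<Sum>k | k \<le> CARD('n) \<and> d < k \<and> odd (k - d). stirl1 CARD('n) k)"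
  unfolding stirl1_def
proof (rule num_regions_cut_eq_twice_sum_odd_coeffs[OF arrA_signed_hyperplanes assms(1-4)])
  let ?q = "\<Prod>i<CARD('n). [:int i, 1:]"
  show "int (poly (\<Prod>i<CARD('n). [:of_nat i, 1:]) x) = poly ?q (int x)" for x
    by (simp add: poly_prod of_nat_prod)
  show "degree ?q \<le> CARD('n)" by (rule degree_prod_linear_le)
  show "int (card ({x::real^'n. \<forall>k. x$k \<in> sym_ints s} - \<Union>arrA))
      = (-1)^CARD('n) * poly ?q (-(2 * int s + 1))" for s
  proof -
    have "int (card ({x::real^'n. \<forall>k. x$k \<in> sym_ints s} - \<Union>arrA))
        = (\<Prod>i<CARD('n). int (2 * s + 1) - int 1 * int i)"
      unfolding card_box_Diff_arrA using int_prod_diff_mult[of "2 * s + 1" 1] by simp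
    then show ?thesis unfolding poly_prod_linear_uminus by (simp add: add.commute)
  qed
  show "poly ?q (-1) = 0"
    using assms(5) by (auto simp: poly_prod intro!: prod_zero bexI[of _ 1])
qed

theorem num_regions_cut_arrB:
  fixes L :: "(real^'n) set"
  assumes "subspace L" "dim L = CARD('n) - d" "d \<le> CARD('n)"
    and "general_position (arrB :: (real^'n) set set) L d"
  shows "num_regions_cut arrB L = 2 * (\<Sum>k | k \<le> CARD('n) \<and> d < k \<and> odd (k - d). Bnum CARD('n) k)"
  unfolding Bnum_def
proof (rule num_regions_cut_eq_twice_sum_odd_coeffs[OF arrB_signed_hyperplanes assms])
  let ?q = "\<Prod>i<CARD('n). [:2 * int i + 1, 1:]"
  show "int (poly (\<Prod>i<CARD('n). [:2 * of_nat i + 1, 1:]) x) = poly ?q (int x)" for x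
    by (simp add: poly_prod of_nat_prod ac_simps)
  show "degree ?q \<le> CARD('n)" by (rule degree_prod_linear_le)
  show "int (card ({x::real^'n. \<forall>k. x$k \<in> sym_ints s} - \<Union>arrB))
      = (-1)^CARD('n) * poly ?q (-(2 * int s + 1))" for s
  proof -
    have "int (card ({x::real^'n. \<forall>k. x$k \<in> sym_ints s} - \<Union>arrB))
        = (\<Prod>i<CARD('n). int (2 * s) - int 2 * int i)"
      unfolding card_box_Diff_arrB by (rule int_prod_diff_mult) simp
    then show ?thesis unfolding poly_prod_linear_uminus by (simp add: add.commute)
  qed
  show "poly ?q (-1) = 0"
    using assms by (auto simp: poly_prod intro!: prod_zero bexI[of _ 0])
qed

theorem num_regions_cut_arrD:
  fixes L :: "(real^'n) set"
  assumes "subspace L" "dim L = CARD('n) - d" "d \<le> CARD('n)"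
    and "general_position (arrD :: (real^'n) set set) L d" "2 \<le> CARD('n)"
  shows "num_regions_cut arrD L = 2 * (\<Sum>k | k \<le> CARD('n) \<and> d < k \<and> odd (k - d). Dnum CARD('n) k)"
  unfolding Dnum_def
proof (rule num_regions_cut_eq_twice_sum_odd_coeffs[OF arrD_signed_hyperplanes assms(1-4)])
  define m where "m = CARD('n) - 1"
  have n: "CARD('n) = Suc m" using assms(5) by (simp add: m_def)
  let ?p = "\<Prod>i<CARD('n) - 1. [:2 * int i + 1, 1:]"
  show "int (poly ((\<Prod>i<CARD('n) - 1. [:2 * of_nat i + 1, 1:]) * [:of_nat CARD('n) - 1, 1:]) x)
      = poly (?p * [:int CARD('n) - 1, 1:]) (int x)" for x
    using assms(5) by (simp add: poly_prod of_nat_prod of_nat_diff ac_simps)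
  have "degree (?p * [:int CARD('n) - 1, 1:]) \<le> degree ?p + degree [:int CARD('n) - 1, 1:]"
    by (rule degree_mult_le)
  also have "\<dots> \<le> (CARD('n) - 1) + 1"
    by (intro add_mono degree_prod_linear_le) simp
  finally show "degree (?p * [:int CARD('n) - 1, 1:]) \<le> CARD('n)"
    using n by simp
  show "int (card ({x::real^'n. \<forall>k. x$k \<in> sym_ints s} - \<Union>arrD))
      = (-1)^CARD('n) * poly (?p * [:int CARD('n) - 1, 1:]) (-(2 * int s + 1))" for s
  proof -
    define B where "B = (\<Prod>i<m. 2 * int s - 2 * int i)"
    have "int (\<Prod>i<m. 2 * s - 2 * i) = B"
      unfolding B_def using int_prod_diff_mult[of "2 * s" 2 s m] by simp
    moreover have "int (\<Prod>i<CARD('n). 2 * s - 2 * i) = B * (2 * int s - 2 * int m)"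
      unfolding B_def n using int_prod_diff_mult[of "2 * s" 2 s "Suc m"] by simp
    ultimately have "int (card ({x::real^'n. \<forall>k. x$k \<in> sym_ints s} - \<Union>arrD))
        = B * (2 * int s + 1 - int m)"
      unfolding card_box_Diff_arrD m_def[symmetric] by (simp add: n algebra_simps)
    also have "\<dots> = (-1)^m * poly (\<Prod>i<m. [:2 * int i + 1, 1:]) (-(2 * int s + 1)) * (2 * int s + 1 - int m)"
      unfolding poly_prod_linear_uminus B_def by (simp add: algebra_simps)
    also have "\<dots> = (-1)^CARD('n) * poly (?p * [:int CARD('n) - 1, 1:]) (-(2 * int s + 1))"
      by (simp add: n m_def[symmetric] algebra_simps)
    finally show ?thesis .
  qed
  show "poly (?p * [:int CARD('n) - 1, 1:]) (-1) = 0"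
    using assms(5) by (auto simp: poly_prod intro!: prod_zero bexI[of _ 0])
qed

theorem theorem3p4:
  fixes L :: "(real^'n) set" and d :: nat
  assumes "subspace L" and "dim L = CARD('n) - d" and "d \<le> CARD('n) - 1"
  shows "(general_position (arrA :: (real^'n) set set) L d \<and> 2 \<le> CARD('n) \<longrightarrow>
            num_regions_cut arrA L
              = 2 * (\<Sum>k | k \<le> CARD('n) \<and> d < k \<and> odd (k - d). stirl1 CARD('n) k))
       \<and> (general_position (arrB :: (real^'n) set set) L d \<longrightarrow>
            num_regions_cut arrB L
              = 2 * (\<Sum>k | k \<le> CARD('n) \<and> d < k \<and> odd (k - d). Bnum CARD('n) k))
       \<and> (general_position (arrD :: (real^'n) set set) L d \<and> 2 \<le> CARD('n) \<longrightarrow>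
            num_regions_cut arrD L
              = 2 * (\<Sum>k | k \<le> CARD('n) \<and> d < k \<and> odd (k - d). Dnum CARD('n) k))"
proof -
  have "d \<le> CARD('n)" using assms(3) by simp
  then show ?thesis
    using num_regions_cut_arrA num_regions_cut_arrB num_regions_cut_arrD assms(1,2) by blast
qed

end
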